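(* Let $r_0\in(1/4,1/2)$ and let $\epsilon>0$ satisfy $r_0<r_0+\epsilon<1/2$. Then there exists a contact form $\beta=h_1(r,\phi)\,dz+h_2(r,\phi)\,d\phi+h_3(r,\phi)\,dr$ on $D_{r_0+\epsilon}\times\mathbb{S}^1$ such that (i) $\beta$ agrees with $dz+r^2d\phi$ on $D_{r_0}\times\mathbb{S}^1$, and (ii) near the boundary of $D_{r_0+\epsilon}\times\mathbb{S}^1$, $\beta$ agrees with $\alpha_0=\cos(2\pi x)\,dz+\sin(2\pi x)\,dy$ expressed in the coordinates $(r,\phi,z)$.
   Context: $T^3=\mathbb{R}^3/\mathbb{Z}^3$ with coordinates $(x,y,z)$ from the cube $[0,1]^3$. $(r,\phi)$ are polar coordinates on $[0,1]^2$ centered at $(1/2,1/2)$, i.e. $x=r\cos\phi+1/2$, $y=r\sin\phi+1/2$; $D_s\subset[0,1]^2$ is the disk of radius $s$ centered at $(1/2,1/2)$, and $D_s\times\mathbb{S}^1\subset T^3$ with $z$ the $\mathbb{S}^1$-coordinate. A 1-form $\beta$ is a contact form if $\beta\wedge d\beta\neq0$ everywhere. *)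

theory Defs
  imports "HOL-Analysis.Analysis"
begin

text \<open>A z-independent 1-form on (region of [0,1]^2) x S^1 is represented by its Cartesian
  coefficient functions (A,B,C) of (x,y):  beta = A dx + B dy + C dz.\<close>

type_synonym form1 = "(real \<times> real \<Rightarrow> real) \<times> (real \<times> real \<Rightarrow> real) \<times> (real \<times> real \<Rightarrow> real)"

definition ctr :: "real \<times> real" where "ctr = (1/2, 1/2)"

definition disk :: "real \<Rightarrow> (real \<times> real) set" where "disk s = ball ctr s"
definition cdisk :: "real \<Rightarrow> (real \<times> real) set" where "cdisk s = cball ctr s"

definition pd :: "bool \<Rightarrow> (real \<times> real \<Rightarrow> real) \<Rightarrow> (real \<times> real \<Rightarrow> real)" where
  "pd b f = (\<lambda>(x, y). if b then deriv (\<lambda>t. f (t, y)) x else deriv (\<lambda>t. f (x, t)) y)"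

text \<open>C-infinity on an open set: all iterated partial derivatives are (Frechet) differentiable.\<close>
definition smooth_on :: "(real \<times> real) set \<Rightarrow> (real \<times> real \<Rightarrow> real) \<Rightarrow> bool" where
  "smooth_on S f \<longleftrightarrow> (\<forall>ds. foldr pd ds f differentiable_on S)"

definition smooth_form_on :: "(real \<times> real) set \<Rightarrow> form1 \<Rightarrow> bool" where
  "smooth_form_on S \<beta> \<longleftrightarrow> (case \<beta> of (A, B, C) \<Rightarrow> smooth_on S A \<and> smooth_on S B \<and> smooth_on S C)"

text \<open>Coefficient of dx/\dy/\dz in beta /\ d beta (z-derivatives vanish):
  beta /\ d beta = (A (C_y - B_z) + B (A_z - C_x) + C (B_x - A_y)) dx/\dy/\dz.\<close>
definition contact_coeff :: "form1 \<Rightarrow> real \<times> real \<Rightarrow> real" where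
  "contact_coeff \<beta> p = (case \<beta> of (A, B, C) \<Rightarrow>
     A p * pd False C p - B p * pd True C p + C p * (pd True B p - pd False A p))"

definition is_contact_on :: "(real \<times> real) set \<Rightarrow> form1 \<Rightarrow> bool" where
  "is_contact_on S \<beta> \<longleftrightarrow> smooth_form_on S \<beta> \<and> (\<forall>p\<in>S. contact_coeff \<beta> p \<noteq> 0)"

definition form_eq_at :: "form1 \<Rightarrow> form1 \<Rightarrow> real \<times> real \<Rightarrow> bool" where
  "form_eq_at \<beta> \<gamma> p \<longleftrightarrow> (case \<beta> of (A, B, C) \<Rightarrow> case \<gamma> of (A', B', C') \<Rightarrow>
      A p = A' p \<and> B p = B' p \<and> C p = C' p)"

text \<open>d phi and d r in Cartesian coordinates (away from the centre):
  d phi = (-(y-1/2) dx + (x-1/2) dy)/r^2,  d r = ((x-1/2) dx + (y-1/2) dy)/r.\<close>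
definition polar_form :: "(real \<Rightarrow> real \<Rightarrow> real) \<Rightarrow> (real \<Rightarrow> real \<Rightarrow> real) \<Rightarrow> (real \<Rightarrow> real \<Rightarrow> real) \<Rightarrow> form1" where
  "polar_form h1 h2 h3 =
    (\<lambda>(x, y). let r = dist (x, y) ctr; \<phi> = Arg (Complex (x - 1/2) (y - 1/2)) in
       h2 r \<phi> * (-(y - 1/2)) / r\<^sup>2 + h3 r \<phi> * (x - 1/2) / r,
     \<lambda>(x, y). let r = dist (x, y) ctr; \<phi> = Arg (Complex (x - 1/2) (y - 1/2)) in
       h2 r \<phi> * (x - 1/2) / r\<^sup>2 + h3 r \<phi> * (y - 1/2) / r,
     \<lambda>(x, y). let r = dist (x, y) ctr; \<phi> = Arg (Complex (x - 1/2) (y - 1/2)) in h1 r \<phi>)"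

text \<open>dz + r^2 d phi = -(y-1/2) dx + (x-1/2) dy + dz (smooth everywhere).\<close>
definition std_form :: form1 where
  "std_form = (\<lambda>(x, y). -(y - 1/2), \<lambda>(x, y). x - 1/2, \<lambda>_. 1)"

definition alpha0 :: form1 where
  "alpha0 = (\<lambda>_. 0, \<lambda>(x, y). sin (2 * pi * x), \<lambda>(x, y). cos (2 * pi * x))"

end

theory Submission
  imports Defs "HOL-Computational_Algebra.Polynomial"
begin

(* The form is glued from five z-independent pieces A dx + B dy + C dz, the k-th living on an
   annulus and agreeing with the next piece on their overlap; the transitions are made with a smooth
   step built from exp(-1/t).  With u = x - 1/2:
   near the centre, dz + r^2 dphi is changed by an exact form into dz + (2u + c) dy, so the dx dy-part
   of its differential stays 2;
   the slope 2 is then raised to that of b(u) = amp tan theta(u), where the angle theta(u) increases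
   slowly and stays just below pi/2;
   rescaling by a positive function turns dz + b dy into cos theta dz + amp sin theta dy;
   the angle is stretched until it has slope 2 pi amp in u;
   finally cos T dz + sin T d(F(r^2) (y - 1/2)), with F increasing from amp to 1 and T becoming
   2 pi x, reaches alpha0.
   In every piece the contact coefficient is a positive term plus terms that are nonnegative because
   all the steps increase with r^2.  Smoothness of all orders comes from an inductively defined
   class of functions that is closed under partial derivatives. *)

section \<open>Smooth step functions\<close>

definition flat_exp :: "real poly \<Rightarrow> real \<Rightarrow> real" where
  "flat_exp q t = (if t > 0 then poly q (1/t) * exp (-(1/t)) else 0)"

definition flat_exp_deriv_poly :: "real poly \<Rightarrow> real poly" where
  "flat_exp_deriv_poly q = [:0, 0, 1:] * (q - pderiv q)"

lemma poly_over_exp_tendsto_0: "((\<lambda>z. poly p z / exp z) \<longlongrightarrow> (0::real)) at_top"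
proof -
  have "((\<lambda>z. \<Sum>i\<le>degree p. coeff p i * (z ^ i / exp z)) \<longlongrightarrow> (\<Sum>i\<le>degree p. coeff p i * 0)) at_top"
    by (intro tendsto_sum tendsto_mult tendsto_const tendsto_power_div_exp_0)
  then show ?thesis
    by (simp add: poly_altdef sum_divide_distrib)
qed

lemma flat_exp_nonpos: "t \<le> 0 \<Longrightarrow> flat_exp q t = 0"
  by (simp add: flat_exp_def)

lemma flat_exp_has_derivative_0: "(flat_exp q has_real_derivative 0) (at 0)"
proof -
  have left: "((\<lambda>t. (flat_exp q t - flat_exp q 0) / (t - 0)) \<longlongrightarrow> 0) (at_left 0)"
  proof (rule Lim_transform_eventually[OF tendsto_const])
    show "\<forall>\<^sub>F t in at_left 0. 0 = (flat_exp q t - flat_exp q 0) / (t - 0)"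
      using eventually_at_left_real[of "-1" 0, simplified] by eventually_elim (auto simp: flat_exp_def)
  qed
  have "((\<lambda>z. poly (pCons 0 q) z / exp z) \<longlongrightarrow> 0) at_top"
    by (rule poly_over_exp_tendsto_0)
  moreover have "\<forall>\<^sub>F z in at_top.
      poly (pCons 0 q) z / exp z = (flat_exp q (inverse z) - flat_exp q 0) / (inverse z - 0)"
    using eventually_gt_at_top[of 0] by eventually_elim (simp add: flat_exp_def field_simps exp_minus)
  ultimately have right: "((\<lambda>t. (flat_exp q t - flat_exp q 0) / (t - 0)) \<longlongrightarrow> 0) (at_right 0)"
    unfolding filterlim_at_right_to_top by (rule Lim_transform_eventually)
  show ?thesis
    unfolding has_field_derivative_iff filterlim_at_split using left right by simp
qed

lemma has_real_derivative_flat_exp: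
  "(flat_exp q has_real_derivative flat_exp (flat_exp_deriv_poly q) t) (at t)"
proof (cases t "0::real" rule: linorder_cases)
  case less
  have "((\<lambda>s. 0) has_real_derivative 0) (at t)" by simp
  then have "(flat_exp q has_real_derivative 0) (at t)"
    by (rule has_field_derivative_transform_within_open[where S="{..<0}"])
       (use less in \<open>auto simp: flat_exp_def\<close>)
  then show ?thesis using less by (simp add: flat_exp_def)
next
  case equal
  then show ?thesis using flat_exp_has_derivative_0[of q] by (simp add: flat_exp_def)
next
  case greater
  have "((\<lambda>s. poly q (1/s) * exp (-(1/s))) has_real_derivative
     poly (pderiv q) (1/t) * (-(1/t^2)) * exp (-(1/t)) + poly q (1/t) * (exp (-(1/t)) * (1/t^2))) (at t)"
    using greater by (auto intro!: derivative_eq_intros simp: power2_eq_square field_simps)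
  moreover have "poly (pderiv q) (1/t) * (-(1/t^2)) * exp (-(1/t)) + poly q (1/t) * (exp (-(1/t)) * (1/t^2))
      = flat_exp (flat_exp_deriv_poly q) t"
    using greater by (simp add: flat_exp_def flat_exp_deriv_poly_def algebra_simps power2_eq_square)
  ultimately have "((\<lambda>s. poly q (1/s) * exp (-(1/s))) has_real_derivative
      flat_exp (flat_exp_deriv_poly q) t) (at t)"
    by simp
  then show ?thesis
    by (rule has_field_derivative_transform_within_open[where S="{0<..}"])
       (use greater in \<open>auto simp: flat_exp_def\<close>)
qed

lemma flat_exp_chain:
  "(f has_real_derivative f') (at x) \<Longrightarrow>
    ((\<lambda>x. flat_exp q (f x)) has_real_derivative flat_exp (flat_exp_deriv_poly q) (f x) * f') (at x)"
  by (rule DERIV_chain2[OF has_real_derivative_flat_exp])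

lemma flat_exp_1_nonneg: "0 \<le> flat_exp 1 t" "0 \<le> flat_exp (flat_exp_deriv_poly 1) t"
  by (auto simp: flat_exp_def flat_exp_deriv_poly_def)

lemma flat_exp_1_pos: "t > 0 \<Longrightarrow> 0 < flat_exp 1 t"
  by (simp add: flat_exp_def)

definition step_denom :: "real \<Rightarrow> real" where
  "step_denom t = flat_exp 1 t + flat_exp 1 (1 - t)"

definition smooth_step :: "real \<Rightarrow> real" where
  "smooth_step t = flat_exp 1 t / step_denom t"

definition smooth_step_deriv :: "real \<Rightarrow> real" where
  "smooth_step_deriv t =
     (flat_exp (flat_exp_deriv_poly 1) t * flat_exp 1 (1 - t)
      + flat_exp 1 t * flat_exp (flat_exp_deriv_poly 1) (1 - t)) / (step_denom t)\<^sup>2"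

definition smooth_step_deriv2 :: "real \<Rightarrow> real" where
  "smooth_step_deriv2 t = deriv smooth_step_deriv t"

lemma step_denom_pos: "0 < step_denom t"
  using flat_exp_1_pos[of t] flat_exp_1_pos[of "1 - t"] flat_exp_1_nonneg(1)[of t]
    flat_exp_1_nonneg(1)[of "1 - t"]
  by (cases "t > 0") (auto simp: step_denom_def add_pos_nonneg add_nonneg_pos)

lemma step_denom_neq_0: "flat_exp 1 t + flat_exp 1 (1 - t) \<noteq> 0"
  using step_denom_pos[of t] by (simp add: step_denom_def)

lemma smooth_step_eq_0: "t \<le> 0 \<Longrightarrow> smooth_step t = 0"
  by (simp add: smooth_step_def flat_exp_nonpos)

lemma smooth_step_eq_1: "1 \<le> t \<Longrightarrow> smooth_step t = 1"
  using step_denom_pos[of t] by (simp add: smooth_step_def step_denom_def flat_exp_nonpos)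

lemma smooth_step_deriv_eq_0: "t \<le> 0 \<or> 1 \<le> t \<Longrightarrow> smooth_step_deriv t = 0"
  by (auto simp: smooth_step_deriv_def flat_exp_nonpos)

lemma smooth_step_nonneg: "0 \<le> smooth_step t"
  using step_denom_pos[of t] flat_exp_1_nonneg by (simp add: smooth_step_def)

lemma smooth_step_le_1: "smooth_step t \<le> 1"
  using step_denom_pos[of t] flat_exp_1_nonneg[of "1 - t"]
  by (simp add: smooth_step_def step_denom_def)

lemma smooth_step_deriv_nonneg: "0 \<le> smooth_step_deriv t"
  using flat_exp_1_nonneg[of t] flat_exp_1_nonneg[of "1 - t"] by (simp add: smooth_step_deriv_def)

lemma has_real_derivative_smooth_step: "(smooth_step has_real_derivative smooth_step_deriv t) (at t)"
proof -
  have "(smooth_step has_real_derivative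
     (flat_exp (flat_exp_deriv_poly 1) t * step_denom t - flat_exp 1 t *
       (flat_exp (flat_exp_deriv_poly 1) t + flat_exp (flat_exp_deriv_poly 1) (1 - t) * (-1)))
     / (step_denom t * step_denom t)) (at t)"
    unfolding smooth_step_def step_denom_def using step_denom_pos[of t]
    by (auto intro!: derivative_eq_intros flat_exp_chain has_real_derivative_flat_exp
        simp: step_denom_def)
  then show ?thesis
    by (simp add: smooth_step_deriv_def step_denom_def power2_eq_square algebra_simps)
qed

lemma has_real_derivative_smooth_step_deriv:
  "(smooth_step_deriv has_real_derivative smooth_step_deriv2 t) (at t)"
proof -
  have "\<exists>D. (smooth_step_deriv has_real_derivative D) (at t)"
    unfolding smooth_step_deriv_def using step_denom_pos[of t]
    by (intro exI)
       (rule derivative_eq_intros flat_exp_chain has_real_derivative_flat_exp refl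
         | simp add: step_denom_def)+
  then show ?thesis
    unfolding smooth_step_deriv2_def
    using DERIV_deriv_iff_field_differentiable field_differentiable_def by blast
qed

lemma smooth_step_chain:
  "(f has_real_derivative f') (at x) \<Longrightarrow>
    ((\<lambda>x. smooth_step (f x)) has_real_derivative smooth_step_deriv (f x) * f') (at x)"
  by (rule DERIV_chain2[OF has_real_derivative_smooth_step])

lemma smooth_step_deriv_chain:
  "(f has_real_derivative f') (at x) \<Longrightarrow>
    ((\<lambda>x. smooth_step_deriv (f x)) has_real_derivative smooth_step_deriv2 (f x) * f') (at x)"
  by (rule DERIV_chain2[OF has_real_derivative_smooth_step_deriv])

section \<open>An algebra of smooth functions on the plane\<close>

text \<open>The rule \<open>cong\<close> makes the class closed, up to agreement on \<open>U\<close>, under partial derivatives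
  (\<open>smooth_alg_pd\<close>); this is how smoothness of all orders is obtained.\<close>

inductive_set smooth_alg :: "(real \<times> real) set \<Rightarrow> (real \<times> real \<Rightarrow> real) set" for U where
  const: "(\<lambda>p. c) \<in> smooth_alg U"
| fstI: "(\<lambda>p. fst p) \<in> smooth_alg U"
| sndI: "(\<lambda>p. snd p) \<in> smooth_alg U"
| add: "f \<in> smooth_alg U \<Longrightarrow> g \<in> smooth_alg U \<Longrightarrow> (\<lambda>p. f p + g p) \<in> smooth_alg U"
| mult: "f \<in> smooth_alg U \<Longrightarrow> g \<in> smooth_alg U \<Longrightarrow> (\<lambda>p. f p * g p) \<in> smooth_alg U"
| sin: "f \<in> smooth_alg U \<Longrightarrow> (\<lambda>p. sin (f p)) \<in> smooth_alg U"
| cos: "f \<in> smooth_alg U \<Longrightarrow> (\<lambda>p. cos (f p)) \<in> smooth_alg U"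
| flat_exp: "f \<in> smooth_alg U \<Longrightarrow> (\<lambda>p. flat_exp q (f p)) \<in> smooth_alg U"
| inverse: "f \<in> smooth_alg U \<Longrightarrow> (\<forall>p\<in>U. f p \<noteq> 0) \<Longrightarrow> (\<lambda>p. inverse (f p)) \<in> smooth_alg U"
| cong: "f \<in> smooth_alg U \<Longrightarrow> (\<forall>p\<in>U. f p = g p) \<Longrightarrow> g \<in> smooth_alg U"

lemma smooth_alg_minus: "f \<in> smooth_alg U \<Longrightarrow> (\<lambda>p. - f p) \<in> smooth_alg U"
  using smooth_alg.mult[OF smooth_alg.const[where c="-1"], of f] by simp

lemma smooth_alg_diff:
  "f \<in> smooth_alg U \<Longrightarrow> g \<in> smooth_alg U \<Longrightarrow> (\<lambda>p. f p - g p) \<in> smooth_alg U"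
  using smooth_alg.add[OF _ smooth_alg_minus, of f U g] by simp

lemma smooth_alg_divide:
  "f \<in> smooth_alg U \<Longrightarrow> g \<in> smooth_alg U \<Longrightarrow> \<forall>p\<in>U. g p \<noteq> 0 \<Longrightarrow>
    (\<lambda>p. f p / g p) \<in> smooth_alg U"
  using smooth_alg.mult[OF _ smooth_alg.inverse, of f U g] by (simp add: divide_inverse)

lemma smooth_alg_divide_const: "f \<in> smooth_alg U \<Longrightarrow> (\<lambda>p. f p / c) \<in> smooth_alg U"
  by (simp add: divide_inverse) (intro smooth_alg.mult smooth_alg.const)

lemma smooth_alg_power: "f \<in> smooth_alg U \<Longrightarrow> (\<lambda>p. f p ^ n) \<in> smooth_alg U"
  by (induction n) (auto intro: smooth_alg.const smooth_alg.mult)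

lemma smooth_alg_smooth_step: "f \<in> smooth_alg U \<Longrightarrow> (\<lambda>p. smooth_step (f p)) \<in> smooth_alg U"
  unfolding smooth_step_def step_denom_def
  by (auto intro!: smooth_alg_divide smooth_alg.flat_exp smooth_alg_diff smooth_alg.const
      smooth_alg.add simp: step_denom_neq_0)

lemma smooth_alg_smooth_step_deriv:
  "f \<in> smooth_alg U \<Longrightarrow> (\<lambda>p. smooth_step_deriv (f p)) \<in> smooth_alg U"
  unfolding smooth_step_deriv_def step_denom_def
  by (auto intro!: smooth_alg_divide smooth_alg.flat_exp smooth_alg_diff smooth_alg.const
      smooth_alg_power smooth_alg.add smooth_alg.mult simp: step_denom_neq_0)

definition grad_map :: "real \<Rightarrow> real \<Rightarrow> real \<times> real \<Rightarrow> real" where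
  "grad_map a b = (\<lambda>h. a * fst h + b * snd h)"

lemma has_derivative_grad_map_compose:
  "(f has_derivative grad_map a b) (at p) \<Longrightarrow> DERIV g (f p) :> D \<Longrightarrow>
    ((\<lambda>x. g (f x)) has_derivative grad_map (a * D) (b * D)) (at p)"
  by (rule has_derivative_eq_rhs[OF DERIV_compose_FDERIV]) (auto simp: grad_map_def algebra_simps)

lemma has_derivative_grad_map_add:
  assumes "(f has_derivative grad_map a b) (at p)" "(g has_derivative grad_map c d) (at p)"
  shows "((\<lambda>x. f x + g x) has_derivative grad_map (a + c) (b + d)) (at p)"
  by (rule has_derivative_eq_rhs[OF has_derivative_add[OF assms]]) (auto simp: grad_map_def algebra_simps)

lemma has_derivative_grad_map_mult:
  assumes "(f has_derivative grad_map a b) (at p)" "(g has_derivative grad_map c d) (at p)"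
  shows "((\<lambda>x. f x * g x) has_derivative grad_map (f p * c + a * g p) (f p * d + b * g p)) (at p)"
  by (rule has_derivative_eq_rhs[OF has_derivative_mult[OF assms]]) (auto simp: grad_map_def algebra_simps)

lemma has_derivative_grad_map_fst: "(fst has_derivative grad_map 1 0) (at p)"
  by (rule has_derivative_eq_rhs[OF has_derivative_fst[OF has_derivative_ident]])
     (auto simp: grad_map_def)

lemma has_derivative_grad_map_snd: "(snd has_derivative grad_map 0 1) (at p)"
  by (rule has_derivative_eq_rhs[OF has_derivative_snd[OF has_derivative_ident]])
     (auto simp: grad_map_def)

lemma has_derivative_grad_map_const: "((\<lambda>x. c) has_derivative grad_map 0 0) (at p)"
  by (rule has_derivative_eq_rhs[OF has_derivative_const]) (auto simp: grad_map_def)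

lemma smooth_alg_has_gradient:
  assumes "f \<in> smooth_alg U" "open U"
  shows "\<exists>fx\<in>smooth_alg U. \<exists>fy\<in>smooth_alg U.
           \<forall>p\<in>U. (f has_derivative grad_map (fx p) (fy p)) (at p)"
  using assms
proof (induction rule: smooth_alg.induct)
  case (const c)
  show ?case
    using has_derivative_grad_map_const by (intro bexI[OF _ smooth_alg.const] ballI) auto
next
  case fstI
  show ?case
    using has_derivative_grad_map_fst by (intro bexI[OF _ smooth_alg.const] ballI) auto
next
  case sndI
  show ?case
    using has_derivative_grad_map_snd by (intro bexI[OF _ smooth_alg.const] ballI) auto
next
  case (add f g)
  then obtain fx fy gx gy where
    f: "fx \<in> smooth_alg U" "fy \<in> smooth_alg U" "\<forall>p\<in>U. (f has_derivative grad_map (fx p) (fy p)) (at p)"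
    and g: "gx \<in> smooth_alg U" "gy \<in> smooth_alg U" "\<forall>p\<in>U. (g has_derivative grad_map (gx p) (gy p)) (at p)"
    by blast
  show ?case
    using f g
    by (intro bexI[OF _ smooth_alg.add[OF f(1) g(1)]] bexI[OF _ smooth_alg.add[OF f(2) g(2)]]
        ballI has_derivative_grad_map_add) auto
next
  case (mult f g)
  then obtain fx fy gx gy where
    f: "fx \<in> smooth_alg U" "fy \<in> smooth_alg U" "\<forall>p\<in>U. (f has_derivative grad_map (fx p) (fy p)) (at p)"
    and g: "gx \<in> smooth_alg U" "gy \<in> smooth_alg U" "\<forall>p\<in>U. (g has_derivative grad_map (gx p) (gy p)) (at p)"
    by blast
  show ?case
    using f g mult.hyps
    by (intro bexI[of _ "\<lambda>p. f p * gx p + fx p * g p"] bexI[of _ "\<lambda>p. f p * gy p + fy p * g p"]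
        ballI has_derivative_grad_map_mult smooth_alg.add smooth_alg.mult) auto
next
  case (sin f)
  then obtain fx fy where
    f: "fx \<in> smooth_alg U" "fy \<in> smooth_alg U" "\<forall>p\<in>U. (f has_derivative grad_map (fx p) (fy p)) (at p)"
    by blast
  show ?case
    using f sin.hyps
    by (intro bexI[of _ "\<lambda>p. fx p * cos (f p)"] bexI[of _ "\<lambda>p. fy p * cos (f p)"]
        ballI has_derivative_grad_map_compose DERIV_sin smooth_alg.mult smooth_alg.cos) auto
next
  case (cos f)
  then obtain fx fy where
    f: "fx \<in> smooth_alg U" "fy \<in> smooth_alg U" "\<forall>p\<in>U. (f has_derivative grad_map (fx p) (fy p)) (at p)"
    by blast
  show ?case
    using f cos.hyps
    by (intro bexI[of _ "\<lambda>p. fx p * - sin (f p)"] bexI[of _ "\<lambda>p. fy p * - sin (f p)"]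
        ballI has_derivative_grad_map_compose DERIV_cos smooth_alg.mult smooth_alg_minus
        smooth_alg.sin) auto
next
  case (flat_exp f q)
  then obtain fx fy where
    f: "fx \<in> smooth_alg U" "fy \<in> smooth_alg U" "\<forall>p\<in>U. (f has_derivative grad_map (fx p) (fy p)) (at p)"
    by blast
  show ?case
    using f flat_exp.hyps
    by (intro bexI[of _ "\<lambda>p. fx p * flat_exp (flat_exp_deriv_poly q) (f p)"]
        bexI[of _ "\<lambda>p. fy p * flat_exp (flat_exp_deriv_poly q) (f p)"]
        ballI has_derivative_grad_map_compose has_real_derivative_flat_exp smooth_alg.mult
        smooth_alg.flat_exp) auto
next
  case (inverse f)
  then obtain fx fy where
    f: "fx \<in> smooth_alg U" "fy \<in> smooth_alg U" "\<forall>p\<in>U. (f has_derivative grad_map (fx p) (fy p)) (at p)"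
    by blast
  have inv: "(\<lambda>p. inverse (f p)) \<in> smooth_alg U"
    using inverse.hyps by (intro smooth_alg.inverse)
  have "DERIV inverse (f p) :> - (inverse (f p) * inverse (f p))" if "p \<in> U" for p
    using inverse.hyps that DERIV_inverse[of "f p"] by (simp add: power2_eq_square)
  then show ?case
    using f inv
    by (intro bexI[of _ "\<lambda>p. fx p * - (inverse (f p) * inverse (f p))"]
        bexI[of _ "\<lambda>p. fy p * - (inverse (f p) * inverse (f p))"]
        ballI has_derivative_grad_map_compose smooth_alg.mult smooth_alg_minus) auto
next
  case (cong f g)
  then obtain fx fy where
    f: "fx \<in> smooth_alg U" "fy \<in> smooth_alg U" "\<forall>p\<in>U. (f has_derivative grad_map (fx p) (fy p)) (at p)"
    by blast
  show ?case
    using f cong by (intro bexI[OF _ f(1)] bexI[OF _ f(2)])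
      (auto intro: has_derivative_transform_within_open)
qed

lemma pd_cong_open:
  assumes "open V" "p \<in> V" "\<And>q. q \<in> V \<Longrightarrow> f q = g q"
  shows "pd b f p = pd b g p"
proof -
  obtain x y where p: "p = (x, y)" by (cases p)
  have "open {t. (t, y) \<in> V}" "open {t. (x, t) \<in> V}"
    using continuous_open_vimage[OF assms(1), of "\<lambda>t. (t, y)"]
      continuous_open_vimage[OF assms(1), of "\<lambda>t. (x, t)"]
    by (simp_all add: vimage_def)
  then have "\<forall>\<^sub>F t in nhds x. f (t, y) = g (t, y)" "\<forall>\<^sub>F t in nhds y. f (x, t) = g (x, t)"
    using assms unfolding eventually_nhds p
    by (intro exI[of _ "{t. (t, y) \<in> V}"] exI[of _ "{t. (x, t) \<in> V}"]; simp)+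
  from this[THEN deriv_cong_ev, OF refl] show ?thesis
    by (simp add: pd_def p)
qed

lemma pd_eq_of_has_real_derivative:
  "((\<lambda>t. f (t, y)) has_real_derivative D) (at x) \<Longrightarrow> pd True f (x, y) = D"
  "((\<lambda>t. f (x, t)) has_real_derivative D) (at y) \<Longrightarrow> pd False f (x, y) = D"
  by (simp_all add: pd_def DERIV_imp_deriv)

lemma pd_eq_of_has_derivative_grad_map:
  assumes "(g has_derivative grad_map a b) (at (x, y))"
  shows "pd True g (x, y) = a" "pd False g (x, y) = b"
proof -
  have "((\<lambda>t. (t, y)) has_derivative (\<lambda>t. (t, 0))) (at x)"
    by (auto intro!: derivative_eq_intros)
  then have "((\<lambda>t. g (t, y)) has_derivative (\<lambda>t. grad_map a b (t, 0))) (at x)"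
    using has_derivative_compose assms by fastforce
  then have "((\<lambda>t. g (t, y)) has_real_derivative a) (at x)"
    by (simp add: has_field_derivative_def grad_map_def mult.commute[of _ a] mult.commute[of _ b])
  then show "pd True g (x, y) = a" by (rule pd_eq_of_has_real_derivative)
  have "((\<lambda>t. (x, t)) has_derivative (\<lambda>t. (0, t))) (at y)"
    by (auto intro!: derivative_eq_intros)
  then have "((\<lambda>t. g (x, t)) has_derivative (\<lambda>t. grad_map a b (0, t))) (at y)"
    using has_derivative_compose assms by fastforce
  then have "((\<lambda>t. g (x, t)) has_real_derivative b) (at y)"
    by (simp add: has_field_derivative_def grad_map_def mult.commute[of _ a] mult.commute[of _ b])
  then show "pd False g (x, y) = b" by (rule pd_eq_of_has_real_derivative)
qed

lemma smooth_alg_pd: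
  assumes "f \<in> smooth_alg U" "open U"
  shows "\<exists>g\<in>smooth_alg U. \<forall>p\<in>U. pd b f p = g p"
proof -
  obtain fx fy where f: "fx \<in> smooth_alg U" "fy \<in> smooth_alg U"
    "\<forall>p\<in>U. (f has_derivative grad_map (fx p) (fy p)) (at p)"
    using smooth_alg_has_gradient[OF assms] by blast
  have "pd b f p = (if b then fx p else fy p)" if "p \<in> U" for p
  proof -
    obtain x y where p: "p = (x, y)" by (cases p)
    show ?thesis
      using pd_eq_of_has_derivative_grad_map[of f "fx p" "fy p" x y] f(3) that
      unfolding p by (cases b) simp_all
  qed
  moreover have "(\<lambda>p. if b then fx p else fy p) \<in> smooth_alg U"
    using f by (cases b) simp_all
  ultimately show ?thesis by (intro bexI[of _ "\<lambda>p. if b then fx p else fy p"]) auto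
qed

lemma smooth_alg_differentiable_on:
  assumes "f \<in> smooth_alg U" "open U"
  shows "f differentiable_on U"
proof -
  obtain fx fy where "\<forall>p\<in>U. (f has_derivative grad_map (fx p) (fy p)) (at p)"
    using smooth_alg_has_gradient[OF assms] by blast
  then show ?thesis
    unfolding differentiable_on_def differentiable_def using has_derivative_at_withinI by blast
qed

lemma smooth_on_smooth_alg:
  assumes "f \<in> smooth_alg U" "open U"
  shows "smooth_on U f"
  unfolding smooth_on_def
proof
  fix ds
  have "\<exists>g\<in>smooth_alg U. \<forall>p\<in>U. foldr pd ds f p = g p"
  proof (induction ds)
    case Nil
    then show ?case using assms by auto
  next
    case (Cons b ds)
    then obtain g where g: "g \<in> smooth_alg U" "\<forall>p\<in>U. foldr pd ds f p = g p" by blast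
    obtain h where h: "h \<in> smooth_alg U" "\<forall>p\<in>U. pd b g p = h p"
      using smooth_alg_pd[OF g(1) assms(2)] by blast
    have "pd b (foldr pd ds f) p = h p" if "p \<in> U" for p
      using pd_cong_open[OF assms(2) that, of "foldr pd ds f" g b] g(2) h(2) that by simp
    then show ?case using h(1) by (intro bexI[of _ h]) simp_all
  qed
  then obtain g where "g \<in> smooth_alg U" "\<forall>p\<in>U. g p = foldr pd ds f p"
    by (metis (full_types))
  then have "foldr pd ds f \<in> smooth_alg U"
    by (rule smooth_alg.cong)
  then show "foldr pd ds f differentiable_on U"
    using smooth_alg_differentiable_on assms(2) by blast
qed

lemma smooth_on_local:
  assumes "open U" "\<And>p. p \<in> U \<Longrightarrow> \<exists>V. open V \<and> p \<in> V \<and> f \<in> smooth_alg V"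
  shows "smooth_on U f"
  unfolding smooth_on_def differentiable_on_def
proof (intro allI ballI)
  fix ds p assume p: "p \<in> U"
  obtain V where V: "open V" "p \<in> V" "f \<in> smooth_alg V" using assms(2)[OF p] by blast
  then have "foldr pd ds f differentiable (at p within V)"
    using smooth_on_smooth_alg[OF V(3,1)] unfolding smooth_on_def differentiable_on_def by blast
  then have "foldr pd ds f differentiable (at p)"
    using at_within_open[OF V(2,1)] by simp
  then show "foldr pd ds f differentiable (at p within U)"
    by (rule differentiable_at_withinI)
qed

section \<open>Forms on the plane\<close>

lemma form_eq_at_iff:
  "form_eq_at \<beta> \<gamma> p \<longleftrightarrow>
     fst \<beta> p = fst \<gamma> p \<and> fst (snd \<beta>) p = fst (snd \<gamma>) p \<and> snd (snd \<beta>) p = snd (snd \<gamma>) p"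
  by (cases \<beta>; cases \<gamma>) (simp add: form_eq_at_def)

definition smooth_alg_form :: "(real \<times> real) set \<Rightarrow> form1 \<Rightarrow> bool" where
  "smooth_alg_form V \<beta> \<longleftrightarrow>
     fst \<beta> \<in> smooth_alg V \<and> fst (snd \<beta>) \<in> smooth_alg V \<and> snd (snd \<beta>) \<in> smooth_alg V"

lemma smooth_alg_form_cong:
  assumes \<gamma>: "smooth_alg_form V \<gamma>" and eq: "\<forall>q\<in>V. form_eq_at \<beta> \<gamma> q"
  shows "smooth_alg_form V \<beta>"
proof -
  have "fst \<gamma> \<in> smooth_alg V" "fst (snd \<gamma>) \<in> smooth_alg V" "snd (snd \<gamma>) \<in> smooth_alg V"
    using \<gamma> by (simp_all add: smooth_alg_form_def)
  moreover have "\<forall>q\<in>V. fst \<gamma> q = fst \<beta> q" "\<forall>q\<in>V. fst (snd \<gamma>) q = fst (snd \<beta>) q"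
    "\<forall>q\<in>V. snd (snd \<gamma>) q = snd (snd \<beta>) q"
    using eq by (simp_all add: form_eq_at_iff)
  ultimately show ?thesis
    unfolding smooth_alg_form_def by (blast intro: smooth_alg.cong)
qed

lemma smooth_form_on_local:
  assumes "open U" "\<And>p. p \<in> U \<Longrightarrow> \<exists>V. open V \<and> p \<in> V \<and> smooth_alg_form V \<beta>"
  shows "smooth_form_on U \<beta>"
proof -
  obtain A B C where \<beta>: "\<beta> = (A, B, C)" by (cases \<beta>)
  show ?thesis
    unfolding \<beta> smooth_form_on_def using assms
    by (auto intro!: smooth_on_local simp: smooth_alg_form_def \<beta>)
qed

lemma contact_coeff_cong_open:
  assumes "open V" "p \<in> V" "\<forall>q\<in>V. form_eq_at \<beta> \<gamma> q"
  shows "contact_coeff \<beta> p = contact_coeff \<gamma> p"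
proof -
  obtain A B C A' B' C' where \<beta>: "\<beta> = (A, B, C)" and \<gamma>: "\<gamma> = (A', B', C')"
    by (cases \<beta>; cases \<gamma>)
  have eq: "A q = A' q" "B q = B' q" "C q = C' q" if "q \<in> V" for q
    using assms(3) that by (auto simp: \<beta> \<gamma> form_eq_at_def)
  have "pd b A p = pd b A' p" "pd b B p = pd b B' p" "pd b C p = pd b C' p" for b
    using pd_cong_open[OF assms(1,2)] eq by metis+
  then show ?thesis
    using eq assms(2) by (simp add: \<beta> \<gamma> contact_coeff_def)
qed

lemma contact_coeff_dz_plus:
  "contact_coeff (A, B, \<lambda>_. 1) (x, y) = pd True B (x, y) - pd False A (x, y)"
proof -
  have "pd True (\<lambda>_. 1) (x, y) = 0" "pd False (\<lambda>_. 1) (x, y) = 0"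
    by (rule pd_eq_of_has_real_derivative; simp)+
  then show ?thesis by (simp add: contact_coeff_def)
qed

lemma contact_coeff_no_dx:
  "contact_coeff (\<lambda>_. 0, B, C) (x, y) = C (x, y) * pd True B (x, y) - B (x, y) * pd True C (x, y)"
proof -
  have "pd False (\<lambda>_. 0) (x, y) = 0"
    by (rule pd_eq_of_has_real_derivative) simp
  then show ?thesis by (simp add: contact_coeff_def)
qed

lemma contact_coeff_rescaled:
  assumes "((\<lambda>t. m (t, y)) has_real_derivative m') (at x)"
    and "((\<lambda>t. g (t, y)) has_real_derivative g') (at x)"
  shows "contact_coeff (\<lambda>_. 0, \<lambda>q. m q * g q, m) (x, y) = (m (x, y))\<^sup>2 * g'"
proof -
  have "pd True (\<lambda>q. m q * g q) (x, y) = m' * g (x, y) + m (x, y) * g'"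
    by (rule pd_eq_of_has_real_derivative) (auto intro!: derivative_eq_intros assms)
  then show ?thesis
    unfolding contact_coeff_no_dx pd_eq_of_has_real_derivative(1)[OF assms(1)]
    by (simp add: algebra_simps power2_eq_square)
qed

text \<open>The last term vanishes when \<open>M dx + P dy\<close> is closed.\<close>

lemma contact_coeff_trig:
  assumes "((\<lambda>t. T (t, y)) has_real_derivative Tx) (at x)"
    and "((\<lambda>t. T (x, t)) has_real_derivative Ty) (at y)"
    and "((\<lambda>t. P (t, y)) has_real_derivative Px) (at x)"
    and "((\<lambda>t. M (x, t)) has_real_derivative My) (at y)"
  shows "contact_coeff (\<lambda>q. sin (T q) * M q, \<lambda>q. sin (T q) * P q, \<lambda>q. cos (T q)) (x, y)
     = Tx * P (x, y) - Ty * M (x, y) + sin (T (x, y)) * cos (T (x, y)) * (Px - My)"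
proof -
  define S where "S = sin (T (x, y))"
  define Co where "Co = cos (T (x, y))"
  have "pd True (\<lambda>q. cos (T q)) (x, y) = - S * Tx"
    "pd False (\<lambda>q. cos (T q)) (x, y) = - S * Ty"
    "pd True (\<lambda>q. sin (T q) * P q) (x, y) = Co * Tx * P (x, y) + S * Px"
    "pd False (\<lambda>q. sin (T q) * M q) (x, y) = Co * Ty * M (x, y) + S * My"
    unfolding S_def Co_def
    by (rule pd_eq_of_has_real_derivative; auto intro!: derivative_eq_intros assms)+
  moreover have "S * P (x, y) * (S * Tx) - S * M (x, y) * (S * Ty) +
        Co * (Co * Tx * P (x, y) + S * Px - (Co * Ty * M (x, y) + S * My))
      = (S\<^sup>2 + Co\<^sup>2) * (Tx * P (x, y) - Ty * M (x, y)) + S * Co * (Px - My)"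
    by (simp add: algebra_simps power2_eq_square)
  moreover have "S\<^sup>2 + Co\<^sup>2 = 1"
    by (simp add: S_def Co_def)
  ultimately show ?thesis
    unfolding contact_coeff_def by (simp add: S_def Co_def)
qed

section \<open>Radial and polar coordinates\<close>

definition rsq :: "real \<times> real \<Rightarrow> real" where
  "rsq p = (fst p - 1/2)\<^sup>2 + (snd p - 1/2)\<^sup>2"

lemma dist_ctr_eq_sqrt_rsq: "dist p ctr = sqrt (rsq p)"
  by (cases p) (simp add: ctr_def dist_Pair_Pair dist_real_def rsq_def)

lemma mem_disk_iff_rsq:
  assumes "0 \<le> R"
  shows "p \<in> disk R \<longleftrightarrow> rsq p < R\<^sup>2"
proof -
  have "p \<in> disk R \<longleftrightarrow> sqrt (rsq p) < sqrt (R\<^sup>2)"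
    using assms by (simp add: disk_def dist_commute[of ctr p] dist_ctr_eq_sqrt_rsq)
  then show ?thesis by (simp only: real_sqrt_less_iff)
qed

lemma mem_cdisk_iff_rsq:
  assumes "0 \<le> R"
  shows "p \<in> cdisk R \<longleftrightarrow> rsq p \<le> R\<^sup>2"
proof -
  have "p \<in> cdisk R \<longleftrightarrow> sqrt (rsq p) \<le> sqrt (R\<^sup>2)"
    using assms by (simp add: cdisk_def dist_commute[of ctr p] dist_ctr_eq_sqrt_rsq)
  then show ?thesis by (simp only: real_sqrt_le_iff)
qed

lemma rsq_has_real_derivative:
  "((\<lambda>t. rsq (t, y)) has_real_derivative 2 * (x - 1/2)) (at x)"
  "((\<lambda>t. rsq (x, t)) has_real_derivative 2 * (y - 1/2)) (at y)"
  unfolding rsq_def by (auto intro!: derivative_eq_intros)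

lemma smooth_alg_rsq: "rsq \<in> smooth_alg U"
  unfolding rsq_def
  by (intro smooth_alg.add smooth_alg_power smooth_alg_diff smooth_alg.fstI smooth_alg.sndI
      smooth_alg.const)

lemma abs_x_less_of_rsq:
  assumes "rsq (x, y) < 1/4"
  shows "\<bar>x - 1/2\<bar> < 1/2"
proof (rule power2_less_imp_less)
  have "\<bar>x - 1/2\<bar>\<^sup>2 \<le> rsq (x, y)" by (simp add: rsq_def)
  then show "\<bar>x - 1/2\<bar>\<^sup>2 < (1/2)\<^sup>2" using assms by (simp add: power2_eq_square)
qed simp

definition polar_point :: "real \<Rightarrow> real \<Rightarrow> real \<times> real" where
  "polar_point r \<phi> = (1/2 + r * cos \<phi>, 1/2 + r * sin \<phi>)"

definition polar_dz :: "form1 \<Rightarrow> real \<Rightarrow> real \<Rightarrow> real" where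
  "polar_dz \<beta> r \<phi> = snd (snd \<beta>) (polar_point r \<phi>)"

definition polar_dphi :: "form1 \<Rightarrow> real \<Rightarrow> real \<Rightarrow> real" where
  "polar_dphi \<beta> r \<phi> =
     r * (fst (snd \<beta>) (polar_point r \<phi>) * cos \<phi> - fst \<beta> (polar_point r \<phi>) * sin \<phi>)"

definition polar_dr :: "form1 \<Rightarrow> real \<Rightarrow> real \<Rightarrow> real" where
  "polar_dr \<beta> r \<phi> = fst \<beta> (polar_point r \<phi>) * cos \<phi> + fst (snd \<beta>) (polar_point r \<phi>) * sin \<phi>"

text \<open>At the centre \<open>polar_form\<close> divides by \<open>r = 0\<close>, so its \<open>dx\<close> and \<open>dy\<close> coefficients
  are \<open>0\<close> there.\<close>

lemma polar_form_polar_coeffs: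
  assumes "fst \<beta> (1/2, 1/2) = 0" "fst (snd \<beta>) (1/2, 1/2) = 0"
  shows "polar_form (polar_dz \<beta>) (polar_dphi \<beta>) (polar_dr \<beta>) = \<beta>"
proof -
  obtain A B C where \<beta>: "\<beta> = (A, B, C)" by (cases \<beta>)
  let ?h1 = "polar_dz \<beta>" and ?h2 = "polar_dphi \<beta>" and ?h3 = "polar_dr \<beta>"
  have "fst (polar_form ?h1 ?h2 ?h3) (x, y) = A (x, y) \<and>
      fst (snd (polar_form ?h1 ?h2 ?h3)) (x, y) = B (x, y) \<and>
      snd (snd (polar_form ?h1 ?h2 ?h3)) (x, y) = C (x, y)" for x y
  proof (cases "x = 1/2 \<and> y = 1/2")
    case True
    then have x: "x = 1/2" and y: "y = 1/2" by auto
    show ?thesis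
      unfolding x y using assms
      by (simp add: polar_form_def polar_dz_def polar_point_def \<beta> dist_ctr_eq_sqrt_rsq rsq_def)
  next
    case False
    define u where "u = x - 1/2"
    define v where "v = y - 1/2"
    define r where "r = sqrt (u\<^sup>2 + v\<^sup>2)"
    define z where "z = Complex u v"
    have z0: "z \<noteq> 0" using False by (auto simp: z_def u_def v_def complex_eq_iff)
    have rz: "cmod z = r" by (simp add: z_def r_def complex_norm)
    have r0: "r \<noteq> 0" using z0 rz by auto
    have rsq: "r\<^sup>2 = u\<^sup>2 + v\<^sup>2" by (simp add: r_def)
    have "cis (Arg z) = sgn z" by (rule cis_Arg[OF z0])
    then have "Re (cis (Arg z)) = Re z / cmod z" "Im (cis (Arg z)) = Im z / cmod z"
      by (simp_all add: sgn_div_norm divide_inverse mult.commute)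
    then have cs: "cos (Arg z) = u / r" "sin (Arg z) = v / r"
      using rz by (simp_all add: z_def)
    have P: "polar_point r (Arg z) = (x, y)"
      using r0 by (simp add: polar_point_def cs u_def v_def)
    have d: "dist (x, y) ctr = r"
      by (simp add: dist_ctr_eq_sqrt_rsq rsq_def r_def u_def v_def)
    have mv: "1/2 - y = - v" by (simp add: v_def)
    define a where "a = A (x, y)"
    define b where "b = B (x, y)"
    have "r * (b * (u / r) - a * (v / r)) * (- v) / r\<^sup>2 + (a * (u / r) + b * (v / r)) * u / r
        = a * (u\<^sup>2 + v\<^sup>2) / r\<^sup>2"
      "r * (b * (u / r) - a * (v / r)) * u / r\<^sup>2 + (a * (u / r) + b * (v / r)) * v / r
        = b * (u\<^sup>2 + v\<^sup>2) / r\<^sup>2"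
      using r0 by (simp_all add: field_simps power2_eq_square)
    then show ?thesis
      using r0 by (simp add: polar_form_def Let_def d z_def[symmetric] u_def[symmetric]
          v_def[symmetric] mv polar_dz_def polar_dphi_def polar_dr_def P cs \<beta> a_def b_def
          rsq[symmetric])
  qed
  then show ?thesis
    by (simp add: \<beta> fun_eq_iff polar_form_def)
qed

section \<open>Steps between two squared radii\<close>

definition step_between :: "real \<Rightarrow> real \<Rightarrow> real \<Rightarrow> real" where
  "step_between s t \<rho> = smooth_step ((\<rho> - s) / (t - s))"

definition step_between_deriv :: "real \<Rightarrow> real \<Rightarrow> real \<Rightarrow> real" where
  "step_between_deriv s t \<rho> = smooth_step_deriv ((\<rho> - s) / (t - s)) / (t - s)"

definition step_between_deriv2 :: "real \<Rightarrow> real \<Rightarrow> real \<Rightarrow> real" where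
  "step_between_deriv2 s t \<rho> = smooth_step_deriv2 ((\<rho> - s) / (t - s)) / (t - s)\<^sup>2"

lemma step_between_chain:
  "s \<noteq> t \<Longrightarrow> (f has_real_derivative f') (at x) \<Longrightarrow>
    ((\<lambda>x. step_between s t (f x)) has_real_derivative step_between_deriv s t (f x) * f') (at x)"
  unfolding step_between_def step_between_deriv_def
  by (rule DERIV_cong[OF smooth_step_chain]) (auto intro!: derivative_eq_intros)

lemma step_between_deriv_chain:
  "s \<noteq> t \<Longrightarrow> (f has_real_derivative f') (at x) \<Longrightarrow>
    ((\<lambda>x. step_between_deriv s t (f x)) has_real_derivative step_between_deriv2 s t (f x) * f') (at x)"
  unfolding step_between_deriv2_def step_between_deriv_def
  by (rule DERIV_cong[OF DERIV_cdivide[OF smooth_step_deriv_chain]])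
     (auto intro!: derivative_eq_intros simp: power2_eq_square)

lemma step_between_eq_0: "s < t \<Longrightarrow> \<rho> \<le> s \<Longrightarrow> step_between s t \<rho> = 0"
  unfolding step_between_def by (rule smooth_step_eq_0) (simp add: divide_nonpos_pos)

lemma step_between_eq_1: "s < t \<Longrightarrow> t \<le> \<rho> \<Longrightarrow> step_between s t \<rho> = 1"
  unfolding step_between_def by (rule smooth_step_eq_1) simp

lemma step_between_deriv_eq_0:
  "s < t \<Longrightarrow> \<rho> \<le> s \<or> t \<le> \<rho> \<Longrightarrow> step_between_deriv s t \<rho> = 0"
  unfolding step_between_deriv_def
  by (subst smooth_step_deriv_eq_0) (auto simp: divide_nonpos_pos)

lemma step_between_nonneg: "0 \<le> step_between s t \<rho>"
  by (simp add: step_between_def smooth_step_nonneg)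

lemma step_between_le_1: "step_between s t \<rho> \<le> 1"
  by (simp add: step_between_def smooth_step_le_1)

lemma step_between_deriv_nonneg: "s < t \<Longrightarrow> 0 \<le> step_between_deriv s t \<rho>"
  by (simp add: step_between_deriv_def smooth_step_deriv_nonneg)

lemma smooth_alg_step_between:
  assumes "f \<in> smooth_alg U"
  shows "(\<lambda>p. step_between s t (f p)) \<in> smooth_alg U"
    and "(\<lambda>p. step_between_deriv s t (f p)) \<in> smooth_alg U"
proof -
  have "(\<lambda>p. (f p - s) / (t - s)) \<in> smooth_alg U"
    by (rule smooth_alg_divide_const[OF smooth_alg_diff[OF assms smooth_alg.const]])
  then show "(\<lambda>p. step_between s t (f p)) \<in> smooth_alg U"
    and "(\<lambda>p. step_between_deriv s t (f p)) \<in> smooth_alg U"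
    unfolding step_between_def step_between_deriv_def
    by (rule smooth_alg_smooth_step, rule smooth_alg_divide_const[OF smooth_alg_smooth_step_deriv])
qed

lemma less_dist_ctr_iff_rsq:
  assumes "0 \<le> R"
  shows "R < dist p ctr \<longleftrightarrow> R\<^sup>2 < rsq p"
proof -
  have "R < dist p ctr \<longleftrightarrow> sqrt (R\<^sup>2) < sqrt (rsq p)"
    using assms by (simp add: dist_ctr_eq_sqrt_rsq)
  then show ?thesis by (simp only: real_sqrt_less_iff)
qed

definition angle :: "real \<Rightarrow> real" where
  "angle g = 2 * pi * (g + 1/2)"

lemma angle_chain:
  "(f has_real_derivative f') (at x) \<Longrightarrow>
    ((\<lambda>x. angle (f x)) has_real_derivative 2 * pi * f') (at x)"
  unfolding angle_def by (auto intro!: derivative_eq_intros)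

locale contact_interpolation =
  fixes r0 \<epsilon> :: real
  assumes r0_gt: "1/4 < r0" and eps_pos: "0 < \<epsilon>" and radius_lt: "r0 + \<epsilon> < 1/2"
begin

definition gap :: real where "gap = \<epsilon> / 10"

definition rad :: "nat \<Rightarrow> real" where "rad k = r0 + real k * gap"

definition rad2 :: "nat \<Rightarrow> real" where "rad2 k = (rad k)\<^sup>2"

lemma gap_pos: "0 < gap"
  using eps_pos by (simp add: gap_def)

lemma rad_pos: "0 < rad k"
  using r0_gt gap_pos by (simp add: rad_def add_pos_nonneg)

lemma rad2_less: "k < l \<Longrightarrow> rad2 k < rad2 l"
  using rad_pos[of k] gap_pos by (simp add: rad2_def rad_def power_strict_mono)

lemma rad2_le: "k \<le> l \<Longrightarrow> rad2 k \<le> rad2 l"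
  using rad2_less[of k l] by (cases "k = l") auto

lemma rad2_chain:
  "rad2 0 < rad2 1" "rad2 1 < rad2 2" "rad2 2 < rad2 3" "rad2 3 < rad2 4" "rad2 4 < rad2 5"
  "rad2 5 < rad2 6" "rad2 6 < rad2 7" "rad2 7 < rad2 8" "rad2 8 < rad2 9"
  by (simp_all add: rad2_less)

lemma rad2_eq_iff: "rad2 k = rad2 l \<longleftrightarrow> k = l"
  using rad2_less[of k l] rad2_less[of l k] by (cases k l rule: linorder_cases) auto

lemma rad2_0: "rad2 0 = r0\<^sup>2"
  by (simp add: rad2_def rad_def)

lemma rad_9: "rad 9 = r0 + \<epsilon> - gap"
  by (simp add: rad_def gap_def)

lemma rad2_6_lt: "rad2 6 < 1/4"
proof -
  have "rad 6 < 1/2" using radius_lt eps_pos by (simp add: rad_def gap_def)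
  then have "(rad 6)\<^sup>2 < (1/2)\<^sup>2" using rad_pos[of 6] by (intro power_strict_mono) auto
  then show ?thesis by (simp add: rad2_def power2_eq_square)
qed

definition amp :: real where "amp = (r0 - 1/4) / 2"

definition K :: real where "K = 64"

definition shift :: real where "shift = (1/4 + amp / K) / (1 - amp)"

lemma amp_pos: "0 < amp" using r0_gt by (simp add: amp_def)

lemma amp_lt: "amp < 1/8" using radius_lt eps_pos by (simp add: amp_def)

lemma shift_gt: "1/4 < shift"
  using amp_pos amp_lt by (simp add: shift_def K_def field_simps)

lemma shift_le: "shift \<le> r0"
proof -
  have "(2 * amp + 1/4) * (1 - amp) - (1/4 + amp / 64) = amp * (2 - 2 * amp - 1/4 - 1/64)"
    by (simp add: field_simps)
  also have "\<dots> \<ge> 0" using amp_pos amp_lt by (intro mult_nonneg_nonneg) auto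
  moreover have "r0 = 2 * amp + 1/4" by (simp add: amp_def field_simps)
  ultimately have "1/4 + amp / K \<le> r0 * (1 - amp)"
    by (simp add: K_def)
  then show ?thesis using amp_lt by (simp add: shift_def field_simps)
qed

definition slow_phase :: "real \<Rightarrow> real" where
  "slow_phase u = - shift + amp * (u / K + shift)"

lemma slow_phase_chain:
  "(f has_real_derivative f') (at x) \<Longrightarrow>
    ((\<lambda>x. slow_phase (f x)) has_real_derivative amp / K * f') (at x)"
  unfolding slow_phase_def by (auto intro!: derivative_eq_intros simp: K_def)

definition shear :: "real \<Rightarrow> real" where
  "shear u = amp * sin (angle (slow_phase u)) / cos (angle (slow_phase u))"

definition shear_deriv :: "real \<Rightarrow> real" where
  "shear_deriv u = amp * (2 * pi * (amp / K)) / (cos (angle (slow_phase u)))\<^sup>2"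

definition shear0 :: real where "shear0 = shear 0"

lemma angle_slow_phase: "angle (slow_phase u) = pi / 2 - 2 * pi * amp * (1 - u) / K"
proof -
  have "shift * (1 - amp) = 1/4 + amp / K" using amp_lt by (simp add: shift_def)
  then have sp: "slow_phase u = -(1/4 + amp / K) + amp * u / K"
    by (simp add: slow_phase_def algebra_simps)
  show ?thesis unfolding angle_def sp by (simp add: field_simps K_def)
qed

lemma cos_angle_slow_phase:
  assumes "\<bar>u\<bar> < 1/2"
  shows "0 < cos (angle (slow_phase u))" "cos (angle (slow_phase u)) \<le> 3 * pi * amp / K"
proof -
  define t where "t = 2 * pi * amp * (1 - u) / K"
  have c: "cos (angle (slow_phase u)) = sin t"
    by (simp add: angle_slow_phase t_def cos_diff)
  have "0 < 2 * pi * amp * (1 - u)" using assms amp_pos by (intro mult_pos_pos) auto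
  then have t0: "0 < t" by (simp add: t_def K_def)
  have "2 * pi * amp * (1 - u) \<le> 2 * pi * amp * (3/2)" using assms amp_pos by (intro mult_left_mono) auto
  then have t1: "t \<le> 3 * pi * amp / K" by (simp add: t_def K_def divide_right_mono)
  moreover have "3 * pi * amp / K < pi" using amp_lt pi_gt_zero by (simp add: K_def field_simps)
  ultimately show "0 < cos (angle (slow_phase u))" using c sin_gt_zero[OF t0] by simp
  show "cos (angle (slow_phase u)) \<le> 3 * pi * amp / K" using c sin_x_le_x[of t] t0 t1 by simp
qed

lemma has_real_derivative_shear:
  assumes "cos (angle (slow_phase u)) \<noteq> 0"
  shows "(shear has_real_derivative shear_deriv u) (at u)"
proof -
  define c where "c = cos (angle (slow_phase u))"
  define s where "s = sin (angle (slow_phase u))"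
  have "(shear has_real_derivative
      (amp * (c * (2 * pi * (amp / K))) * c - amp * s * (- s * (2 * pi * (amp / K)))) / (c * c)) (at u)"
    unfolding shear_def[abs_def] c_def s_def using assms
    by (auto intro!: derivative_eq_intros angle_chain slow_phase_chain)
  moreover have "amp * (c * (2 * pi * (amp / K))) * c - amp * s * (- s * (2 * pi * (amp / K)))
      = amp * (2 * pi * (amp / K)) * (s\<^sup>2 + c\<^sup>2)"
    by (simp add: algebra_simps power2_eq_square add_divide_distrib)
  moreover have "s\<^sup>2 + c\<^sup>2 = 1" by (simp add: s_def c_def)
  ultimately show ?thesis by (simp add: shear_deriv_def c_def power2_eq_square)
qed

lemma shear_deriv_ge_2:
  assumes "\<bar>u\<bar> < 1/2"
  shows "2 \<le> shear_deriv u"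
proof -
  define c where "c = cos (angle (slow_phase u))"
  have c0: "0 < c" and c1: "c \<le> 3 * pi * amp / K"
    using cos_angle_slow_phase[OF assms] by (auto simp: c_def)
  have "2 * K * c\<^sup>2 \<le> 2 * K * (3 * pi * amp / K)\<^sup>2"
    using c0 c1 by (simp add: power_mono K_def)
  also have "\<dots> = 18 * pi * (pi * amp * amp) / 64" by (simp add: K_def power2_eq_square)
  also have "\<dots> \<le> 128 * (pi * amp * amp) / 64"
    using pi_less_4 amp_pos by (intro divide_right_mono mult_right_mono) auto
  finally have "2 * (K * c\<^sup>2) \<le> amp * (2 * pi * amp)" by (simp add: mult_ac)
  then show ?thesis
    using c0 by (simp add: shear_deriv_def c_def[symmetric] pos_le_divide_eq K_def mult_ac)
qed

lemma shear_excess_sign: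
  assumes "\<bar>u\<bar> < 1/2"
  shows "0 \<le> u * (shear u - 2 * u - shear0)"
proof -
  let ?f = "\<lambda>t. shear t - 2 * t"
  have deriv: "\<exists>y. DERIV ?f t :> y \<and> 0 \<le> y" if "\<bar>t\<bar> < 1/2" for t
    using has_real_derivative_shear[of t] cos_angle_slow_phase(1)[OF that] shear_deriv_ge_2[OF that]
    by (auto intro!: derivative_eq_intros)
  note mono = DERIV_nonneg_imp_nondecreasing[where f="?f"]
  show ?thesis
  proof (cases "0 \<le> u")
    case True
    have "?f 0 \<le> ?f u" by (rule mono[OF True]) (use deriv assms in auto)
    then show ?thesis using True by (simp add: shear0_def)
  next
    case False
    have "?f u \<le> ?f 0" by (rule mono) (use deriv assms False in auto)
    then show ?thesis using False by (simp add: shear0_def mult_nonpos_nonpos)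
  qed
qed

subsection \<open>The five pieces\<close>

definition fade :: "real \<Rightarrow> real" where
  "fade \<rho> = 1 - step_between (rad2 0) (rad2 1) \<rho>"

definition fade_deriv :: "real \<Rightarrow> real" where
  "fade_deriv \<rho> = - step_between_deriv (rad2 0) (rad2 1) \<rho>"

definition fade_deriv2 :: "real \<Rightarrow> real" where
  "fade_deriv2 \<rho> = - step_between_deriv2 (rad2 0) (rad2 1) \<rho>"

lemma fade_chain:
  "(f has_real_derivative f') (at x) \<Longrightarrow>
    ((\<lambda>x. fade (f x)) has_real_derivative fade_deriv (f x) * f') (at x)"
  "(f has_real_derivative f') (at x) \<Longrightarrow>
    ((\<lambda>x. fade_deriv (f x)) has_real_derivative fade_deriv2 (f x) * f') (at x)"
  unfolding fade_def fade_deriv_def fade_deriv2_def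
  using step_between_chain step_between_deriv_chain rad2_less[of 0 1]
  by (auto intro!: derivative_eq_intros)

text \<open>With \<open>u = x - 1/2\<close> and \<open>v = y - 1/2\<close> this is
  \<open>dz + (2u + shear0) dy - d(fade(r\<^sup>2) v (u + shear0))\<close>: the \<open>dx dy\<close>-part of its
  differential is \<open>2\<close> everywhere, and it is \<open>dz + r\<^sup>2 d\<phi>\<close> where \<open>fade = 1\<close>.\<close>

definition beta_centre :: form1 where
  "beta_centre =
    (\<lambda>(x, y). - (2 * (x - 1/2) * (y - 1/2) * ((x - 1/2) + shear0) * fade_deriv (rsq (x, y))
                 + fade (rsq (x, y)) * (y - 1/2)),
     \<lambda>(x, y). 2 * (x - 1/2) + shear0 - (2 * (y - 1/2) * (y - 1/2) * ((x - 1/2) + shear0)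
                 * fade_deriv (rsq (x, y)) + fade (rsq (x, y)) * ((x - 1/2) + shear0)),
     \<lambda>_. 1)"

definition beta_shear :: form1 where
  "beta_shear =
    (\<lambda>_. 0,
     \<lambda>(x, y). 2 * (x - 1/2) + shear0
       + step_between (rad2 2) (rad2 3) (rsq (x, y)) * (shear (x - 1/2) - 2 * (x - 1/2) - shear0),
     \<lambda>_. 1)"

definition rescaling :: "real \<times> real \<Rightarrow> real" where
  "rescaling = (\<lambda>(x, y).
     1 + step_between (rad2 4) (rad2 5) (rsq (x, y)) * (cos (angle (slow_phase (x - 1/2))) - 1))"

definition beta_rescale :: form1 where
  "beta_rescale = (\<lambda>_. 0, \<lambda>q. rescaling q * shear (fst q - 1/2), rescaling)"

definition stretch_angle :: "real \<times> real \<Rightarrow> real" where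
  "stretch_angle = (\<lambda>(x, y). angle (- shift + amp *
     ((1/K + (1 - 1/K) * step_between (rad2 6) (rad2 7) (rsq (x, y))) * (x - 1/2) + shift)))"

definition beta_stretch :: form1 where
  "beta_stretch = (\<lambda>_. 0, \<lambda>q. sin (stretch_angle q) * amp, \<lambda>q. cos (stretch_angle q))"

definition outer_amp :: "real \<Rightarrow> real" where
  "outer_amp \<rho> = amp + (1 - amp) * step_between (rad2 8) (rad2 9) \<rho>"

definition outer_amp_deriv :: "real \<Rightarrow> real" where
  "outer_amp_deriv \<rho> = (1 - amp) * step_between_deriv (rad2 8) (rad2 9) \<rho>"

definition outer_amp_deriv2 :: "real \<Rightarrow> real" where
  "outer_amp_deriv2 \<rho> = (1 - amp) * step_between_deriv2 (rad2 8) (rad2 9) \<rho>"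

lemma outer_amp_chain:
  "(f has_real_derivative f') (at x) \<Longrightarrow>
    ((\<lambda>x. outer_amp (f x)) has_real_derivative outer_amp_deriv (f x) * f') (at x)"
  "(f has_real_derivative f') (at x) \<Longrightarrow>
    ((\<lambda>x. outer_amp_deriv (f x)) has_real_derivative outer_amp_deriv2 (f x) * f') (at x)"
  unfolding outer_amp_def outer_amp_deriv_def outer_amp_deriv2_def
  using step_between_chain step_between_deriv_chain rad2_less[of 8 9]
  by (auto intro!: derivative_eq_intros)

definition outer_angle :: "real \<times> real \<Rightarrow> real" where
  "outer_angle = (\<lambda>(x, y). angle (- shift + outer_amp (rsq (x, y)) * ((x - 1/2) + shift)))"

text \<open>\<open>cos T dz + sin T dg\<close> with \<open>T = outer_angle\<close> and \<open>g = outer_amp(r\<^sup>2) (y - 1/2)\<close>.\<close>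

definition beta_outer :: form1 where
  "beta_outer =
    (\<lambda>q. sin (outer_angle q) * (2 * (fst q - 1/2) * (snd q - 1/2) * outer_amp_deriv (rsq q)),
     \<lambda>q. sin (outer_angle q) * (outer_amp (rsq q)
            + 2 * (snd q - 1/2) * (snd q - 1/2) * outer_amp_deriv (rsq q)),
     \<lambda>q. cos (outer_angle q))"

subsection \<open>Positivity of the contact coefficients\<close>

lemma contact_coeff_beta_centre: "contact_coeff beta_centre (x, y) = 2"
proof -
  let ?u = "x - 1/2" and ?v = "y - 1/2" and ?r = "rsq (x, y)"
  have dB: "((\<lambda>t. fst (snd beta_centre) (t, y)) has_real_derivative
     2 - (2 * ?v * ?v * (1 * fade_deriv ?r + (?u + shear0) * (fade_deriv2 ?r * (2 * ?u)))
       + (fade_deriv ?r * (2 * ?u) * (?u + shear0) + fade ?r))) (at x)"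
    unfolding beta_centre_def fst_conv snd_conv
    by (auto intro!: derivative_eq_intros fade_chain rsq_has_real_derivative) algebra
  have dA: "((\<lambda>t. fst beta_centre (x, t)) has_real_derivative
     - (2 * ?u * (?u + shear0) * (fade_deriv ?r + ?v * (fade_deriv2 ?r * (2 * ?v)))
       + (fade_deriv ?r * (2 * ?v) * ?v + fade ?r))) (at y)"
    unfolding beta_centre_def fst_conv
    by (auto intro!: derivative_eq_intros fade_chain rsq_has_real_derivative) algebra
  have "beta_centre = (fst beta_centre, fst (snd beta_centre), \<lambda>_. 1)"
    by (simp add: beta_centre_def)
  then have "contact_coeff beta_centre (x, y)
      = pd True (fst (snd beta_centre)) (x, y) - pd False (fst beta_centre) (x, y)"
    by (metis contact_coeff_dz_plus)
  then show ?thesis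
    unfolding pd_eq_of_has_real_derivative(1)[OF dB] pd_eq_of_has_real_derivative(2)[OF dA]
    by (simp add: field_simps)
qed

lemma shear_x_has_real_derivative:
  assumes "\<bar>x - 1/2\<bar> < 1/2"
  shows "((\<lambda>t. shear (t - 1/2)) has_real_derivative shear_deriv (x - 1/2)) (at x)"
proof -
  have "(shear has_real_derivative shear_deriv (x - 1/2)) (at (x - 1/2))"
    using has_real_derivative_shear cos_angle_slow_phase(1)[OF assms] by simp
  moreover have "((\<lambda>t. t - 1/2) has_real_derivative 1) (at x)"
    by (auto intro!: derivative_eq_intros)
  ultimately show ?thesis
    using DERIV_chain2 by fastforce
qed

lemma contact_coeff_beta_shear_pos:
  assumes "\<bar>x - 1/2\<bar> < 1/2"
  shows "0 < contact_coeff beta_shear (x, y)"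
proof -
  let ?u = "x - 1/2" and ?s = "step_between (rad2 2) (rad2 3) (rsq (x, y))"
    and ?s' = "step_between_deriv (rad2 2) (rad2 3) (rsq (x, y))"
  note dshear = shear_x_has_real_derivative[OF assms]
  have "pd True (fst (snd beta_shear)) (x, y)
      = 2 + ?s' * (2 * ?u) * (shear ?u - 2 * ?u - shear0) + ?s * (shear_deriv ?u - 2)"
    by (rule pd_eq_of_has_real_derivative, unfold beta_shear_def fst_conv snd_conv)
       ((auto intro!: derivative_eq_intros step_between_chain rsq_has_real_derivative dshear
          simp: rad2_eq_iff); simp add: algebra_simps)
  moreover have "pd True (\<lambda>_. 1) (x, y) = 0"
    by (rule pd_eq_of_has_real_derivative) simp
  moreover have "0 \<le> ?s' * (2 * ?u) * (shear ?u - 2 * ?u - shear0)"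
  proof -
    have "0 \<le> 2 * ?s' * (?u * (shear ?u - 2 * ?u - shear0))"
      using step_between_deriv_nonneg[OF rad2_less, of 2 3] shear_excess_sign[OF assms] by simp
    then show ?thesis by (simp only: mult_ac)
  qed
  moreover have "0 \<le> ?s * (shear_deriv ?u - 2)"
    using step_between_nonneg shear_deriv_ge_2[OF assms] by simp
  ultimately show ?thesis
    by (simp add: beta_shear_def contact_coeff_no_dx)
qed

lemma contact_coeff_beta_rescale_pos:
  assumes "\<bar>x - 1/2\<bar> < 1/2"
  shows "0 < contact_coeff beta_rescale (x, y)"
proof -
  let ?c = "cos (angle (slow_phase (x - 1/2)))" and ?s = "step_between (rad2 4) (rad2 5) (rsq (x, y))"
  have "((\<lambda>t. rescaling (t, y)) has_real_derivative
      step_between_deriv (rad2 4) (rad2 5) (rsq (x, y)) * (2 * (x - 1/2)) * (?c - 1)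
      + ?s * (- sin (angle (slow_phase (x - 1/2))) * (2 * pi * (amp / K)))) (at x)"
    unfolding rescaling_def
    by (auto intro!: derivative_eq_intros step_between_chain rsq_has_real_derivative angle_chain
        slow_phase_chain simp: rad2_eq_iff)
  from contact_coeff_rescaled[OF this, of "\<lambda>q. shear (fst q - 1/2)"]
  have "contact_coeff beta_rescale (x, y) = (rescaling (x, y))\<^sup>2 * shear_deriv (x - 1/2)"
    using shear_x_has_real_derivative[OF assms] by (simp add: beta_rescale_def)
  moreover have "?c \<le> rescaling (x, y)"
  proof -
    have "?c = (1 - ?s) * ?c + ?s * ?c" by (simp add: algebra_simps)
    also have "\<dots> \<le> (1 - ?s) + ?s * ?c"
      using step_between_le_1[of "rad2 4" "rad2 5" "rsq (x, y)"] by (simp add: mult_left_le)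
    finally show ?thesis by (simp add: rescaling_def algebra_simps)
  qed
  ultimately show ?thesis
    using cos_angle_slow_phase(1)[OF assms] shear_deriv_ge_2[OF assms] by simp
qed

lemma contact_coeff_beta_stretch_pos: "0 < contact_coeff beta_stretch (x, y)"
proof -
  let ?s = "step_between (rad2 6) (rad2 7) (rsq (x, y))"
    and ?s' = "step_between_deriv (rad2 6) (rad2 7) (rsq (x, y))"
  let ?Tx = "2 * pi * (amp * ((1/K + (1 - 1/K) * ?s) + (x - 1/2) * ((1 - 1/K) * ?s' * (2 * (x - 1/2)))))"
  have "((\<lambda>t. stretch_angle (t, y)) has_real_derivative ?Tx) (at x)"
    unfolding stretch_angle_def
    by ((auto intro!: derivative_eq_intros step_between_chain rsq_has_real_derivative angle_chain
        simp: rad2_eq_iff); simp add: algebra_simps)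
  moreover obtain Ty where "((\<lambda>t. stretch_angle (x, t)) has_real_derivative Ty) (at y)"
    unfolding stretch_angle_def
    by (fastforce intro!: derivative_eq_intros step_between_chain rsq_has_real_derivative angle_chain
        simp: rad2_eq_iff)
  ultimately have "contact_coeff beta_stretch (x, y) = ?Tx * amp"
    using contact_coeff_trig[of stretch_angle y ?Tx x _ "\<lambda>_. amp" 0 "\<lambda>_. 0" 0]
    by (simp add: beta_stretch_def)
  moreover have "0 \<le> (x - 1/2) * ((1 - 1/K) * ?s' * (2 * (x - 1/2)))"
  proof -
    have "0 \<le> 2 * (1 - 1/K) * ?s' * ((x - 1/2) * (x - 1/2))"
      using step_between_deriv_nonneg[OF rad2_less, of 6 7] by (simp add: K_def)
    then show ?thesis by (simp only: mult_ac)
  qed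
  moreover have "0 < 1/K + (1 - 1/K) * ?s"
    using step_between_nonneg[of "rad2 6" "rad2 7" "rsq (x, y)"] by (simp add: K_def)
  ultimately show ?thesis
    using amp_pos by simp
qed

lemma contact_coeff_beta_outer:
  "contact_coeff beta_outer (x, y) = 2 * pi * (outer_amp (rsq (x, y)) * (outer_amp (rsq (x, y))
     + 2 * outer_amp_deriv (rsq (x, y)) * ((x - 1/2)\<^sup>2 + (y - 1/2)\<^sup>2 + shift * (x - 1/2))))"
proof -
  let ?u = "x - 1/2" and ?v = "y - 1/2" and ?r = "rsq (x, y)"
  let ?F = outer_amp and ?F' = outer_amp_deriv and ?F'' = outer_amp_deriv2
  have Tx: "((\<lambda>t. outer_angle (t, y)) has_real_derivative
      2 * pi * (?F' ?r * (2 * ?u) * (?u + shift) + ?F ?r)) (at x)"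
    unfolding outer_angle_def
    by ((auto intro!: derivative_eq_intros outer_amp_chain rsq_has_real_derivative angle_chain);
        simp add: algebra_simps)
  have Ty: "((\<lambda>t. outer_angle (x, t)) has_real_derivative
      2 * pi * (?F' ?r * (2 * ?v) * (?u + shift))) (at y)"
    unfolding outer_angle_def
    by ((auto intro!: derivative_eq_intros outer_amp_chain rsq_has_real_derivative angle_chain);
        simp add: algebra_simps)
  define P where "P = (\<lambda>q. ?F (rsq q) + 2 * (snd q - 1/2) * (snd q - 1/2) * ?F' (rsq q))"
  define M where "M = (\<lambda>q. 2 * (fst q - 1/2) * (snd q - 1/2) * ?F' (rsq q))"
  have Px: "((\<lambda>t. P (t, y)) has_real_derivative ?F' ?r * (2 * ?u) + 2 * ?v * ?v * (?F'' ?r * (2 * ?u))) (at x)"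
    unfolding P_def fst_conv snd_conv
    by ((auto intro!: derivative_eq_intros outer_amp_chain rsq_has_real_derivative);
        simp add: algebra_simps)
  have My: "((\<lambda>t. M (x, t)) has_real_derivative 2 * ?u * (?F' ?r + ?v * (?F'' ?r * (2 * ?v)))) (at y)"
    unfolding M_def fst_conv snd_conv
    by (auto intro!: derivative_eq_intros outer_amp_chain rsq_has_real_derivative) algebra
  have closed: "?F' ?r * (2 * ?u) + 2 * ?v * ?v * (?F'' ?r * (2 * ?u))
      - 2 * ?u * (?F' ?r + ?v * (?F'' ?r * (2 * ?v))) = 0"
    by (simp add: field_simps)
  have "contact_coeff beta_outer (x, y) =
      2 * pi * (?F' ?r * (2 * ?u) * (?u + shift) + ?F ?r) * (?F ?r + 2 * ?v * ?v * ?F' ?r)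
      - 2 * pi * (?F' ?r * (2 * ?v) * (?u + shift)) * (2 * ?u * ?v * ?F' ?r)"
    unfolding beta_outer_def using contact_coeff_trig[OF Tx Ty Px My] closed
    by (simp add: P_def M_def)
  then show ?thesis
    by (simp add: algebra_simps power2_eq_square)
qed

lemma contact_coeff_beta_outer_pos: "0 < contact_coeff beta_outer (x, y)"
proof -
  let ?r = "rsq (x, y)" and ?u = "x - 1/2" and ?v = "y - 1/2"
  have F: "amp \<le> outer_amp ?r"
    using step_between_nonneg[of "rad2 8" "rad2 9" ?r] amp_lt by (simp add: outer_amp_def)
  have "0 \<le> outer_amp_deriv ?r * (?u\<^sup>2 + ?v\<^sup>2 + shift * ?u)"
  proof (cases "?r \<le> rad2 8")
    case True
    then show ?thesis
      using step_between_deriv_eq_0[OF rad2_less, of 8 9] by (simp add: outer_amp_deriv_def)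
  next
    case False
    have "shift\<^sup>2 \<le> r0\<^sup>2"
      using shift_le shift_gt by (intro power_mono) auto
    then have "shift\<^sup>2 \<le> rad2 8"
      using rad2_less[of 0 8] by (simp add: rad2_0)
    then have "shift\<^sup>2 * ?u\<^sup>2 \<le> ?r * ?r"
      using False by (intro mult_mono) (auto simp: rsq_def)
    then have "(shift * \<bar>?u\<bar>)\<^sup>2 \<le> ?r\<^sup>2"
      by (simp add: power_mult_distrib power2_abs power2_eq_square[of "rsq (x, y)"])
    then have "shift * \<bar>?u\<bar> \<le> ?r"
      by (rule power2_le_imp_le) (simp add: rsq_def)
    moreover have "- (shift * \<bar>?u\<bar>) \<le> shift * ?u"
      using mult_left_mono[of "- \<bar>?u\<bar>" ?u shift] shift_gt by simp
    ultimately have "0 \<le> ?u\<^sup>2 + ?v\<^sup>2 + shift * ?u"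
      unfolding rsq_def by simp
    moreover have "0 \<le> outer_amp_deriv ?r"
      using amp_lt step_between_deriv_nonneg[OF rad2_less, of 8 9] by (simp add: outer_amp_deriv_def)
    ultimately show ?thesis by simp
  qed
  then show ?thesis
    using F amp_pos by (simp add: contact_coeff_beta_outer add_pos_nonneg)
qed

subsection \<open>Gluing the pieces\<close>

lemma centre_eq_shear:
  assumes "rad2 1 < rsq q" "rsq q < rad2 2"
  shows "form_eq_at beta_centre beta_shear q"
proof -
  have "step_between (rad2 0) (rad2 1) (rsq q) = 1" "step_between_deriv (rad2 0) (rad2 1) (rsq q) = 0"
    "step_between (rad2 2) (rad2 3) (rsq q) = 0"
    using assms rad2_chain
    by (auto intro: step_between_eq_1 step_between_deriv_eq_0 step_between_eq_0)
  then show ?thesis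
    by (auto simp: form_eq_at_iff beta_centre_def beta_shear_def fade_def fade_deriv_def split_beta)
qed

lemma shear_eq_rescale:
  assumes "rad2 3 < rsq q" "rsq q < rad2 4"
  shows "form_eq_at beta_shear beta_rescale q"
proof -
  have "step_between (rad2 2) (rad2 3) (rsq q) = 1" "step_between (rad2 4) (rad2 5) (rsq q) = 0"
    using assms rad2_chain by (auto intro: step_between_eq_1 step_between_eq_0)
  then show ?thesis
    by (auto simp: form_eq_at_iff beta_shear_def beta_rescale_def rescaling_def split_beta)
qed

lemma rescale_eq_stretch:
  assumes "rad2 5 < rsq q" "rsq q < rad2 6"
  shows "form_eq_at beta_rescale beta_stretch q"
proof -
  obtain x y where q: "q = (x, y)" by (cases q)
  have "\<bar>x - 1/2\<bar> < 1/2"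
    using assms rad2_6_lt by (intro abs_x_less_of_rsq[of x y]) (simp add: q)
  then have "cos (angle (slow_phase (x - 1/2))) \<noteq> 0"
    using cos_angle_slow_phase(1) by force
  moreover have "step_between (rad2 4) (rad2 5) (rsq q) = 1" "step_between (rad2 6) (rad2 7) (rsq q) = 0"
    using assms rad2_chain by (auto intro: step_between_eq_1 step_between_eq_0)
  moreover have "stretch_angle q = angle (slow_phase (x - 1/2))"
    using calculation by (simp add: q stretch_angle_def slow_phase_def K_def)
  ultimately show ?thesis
    by (simp add: q form_eq_at_iff beta_rescale_def beta_stretch_def rescaling_def shear_def)
qed

lemma stretch_eq_outer:
  assumes "rad2 7 < rsq q" "rsq q < rad2 8"
  shows "form_eq_at beta_stretch beta_outer q"
proof -
  have "step_between (rad2 6) (rad2 7) (rsq q) = 1" "step_between (rad2 8) (rad2 9) (rsq q) = 0"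
    "step_between_deriv (rad2 8) (rad2 9) (rsq q) = 0"
    using assms rad2_chain
    by (auto intro: step_between_eq_1 step_between_eq_0 step_between_deriv_eq_0)
  moreover have "stretch_angle q = outer_angle q"
    using calculation by (simp add: stretch_angle_def outer_angle_def outer_amp_def split_beta)
  ultimately show ?thesis
    by (simp add: form_eq_at_iff beta_stretch_def beta_outer_def outer_amp_def outer_amp_deriv_def)
qed

definition pieces :: "form1 list" where
  "pieces = [beta_centre, beta_shear, beta_rescale, beta_stretch, beta_outer]"

lemma pieces_agree:
  assumes "j < 4" "rad2 (2 * j + 1) < rsq q" "rsq q < rad2 (2 * j + 2)"
  shows "form_eq_at (pieces ! j) (pieces ! Suc j) q"
proof -
  from assms(1) consider "j = 0" | "j = 1" | "j = 2" | "j = 3" by linarith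
  then show ?thesis
    by cases (use assms centre_eq_shear shear_eq_rescale rescale_eq_stretch stretch_eq_outer in
        \<open>simp_all add: pieces_def numeral_eq_Suc\<close>)
qed

text \<open>Zones \<open>k\<close> and \<open>k + 1\<close> overlap in \<open>rad2 (2k + 1) < r\<^sup>2 < rad2 (2k + 2)\<close>, where
  the corresponding pieces agree; the glued form switches pieces in the middle of each overlap.\<close>

definition zone :: "nat \<Rightarrow> (real \<times> real) set" where
  "zone k = {q. (k = 0 \<or> rad2 (2 * k - 1) < rsq q) \<and> (k = 4 \<or> rsq q < rad2 (2 * k + 2))}"

definition switch :: "nat \<Rightarrow> real" where
  "switch j = (rad2 (2 * j + 1) + rad2 (2 * j + 2)) / 2"

definition piece_index :: "real \<times> real \<Rightarrow> nat" where
  "piece_index q = (LEAST j. j = 4 \<or> rsq q < switch j)"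

definition glued :: form1 where
  "glued = (\<lambda>q. fst (pieces ! piece_index q) q, \<lambda>q. fst (snd (pieces ! piece_index q)) q,
            \<lambda>q. snd (snd (pieces ! piece_index q)) q)"

lemma switch_bounds: "rad2 (2 * j + 1) < switch j" "switch j < rad2 (2 * j + 2)"
  using rad2_less[of "2 * j + 1" "2 * j + 2"] by (simp_all add: switch_def)

lemma piece_index_le: "piece_index q \<le> 4"
  unfolding piece_index_def by (rule Least_le) simp

lemma piece_index_below: "piece_index q < 4 \<Longrightarrow> rsq q < switch (piece_index q)"
  unfolding piece_index_def by (metis (mono_tags, lifting) LeastI less_irrefl)

lemma piece_index_above: "j < piece_index q \<Longrightarrow> switch j \<le> rsq q"
  unfolding piece_index_def using piece_index_le[of q] not_less_Least
  by (fastforce simp: piece_index_def)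

lemma glued_eq_piece:
  assumes "k < 5" "q \<in> zone k"
  shows "form_eq_at glued (pieces ! k) q"
proof -
  let ?i = "piece_index q"
  have lo: "0 < k \<Longrightarrow> rad2 (2 * k - 1) < rsq q" and hi: "k < 4 \<Longrightarrow> rsq q < rad2 (2 * k + 2)"
    using assms by (auto simp: zone_def)
  have "\<not> ?i + 2 \<le> k"
  proof
    assume "?i + 2 \<le> k"
    then have "rsq q < switch ?i" using piece_index_below assms(1) by simp
    also have "\<dots> < rad2 (2 * ?i + 2)" by (rule switch_bounds)
    also have "\<dots> \<le> rad2 (2 * k - 1)" using \<open>?i + 2 \<le> k\<close> by (simp add: rad2_le)
    finally show False using lo \<open>?i + 2 \<le> k\<close> by simp
  qed
  moreover have "\<not> k + 2 \<le> ?i"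
  proof
    assume "k + 2 \<le> ?i"
    then have "rad2 (2 * k + 2) \<le> rad2 (2 * (k + 1) + 1)" by (simp add: rad2_le)
    also have "\<dots> < switch (k + 1)" by (rule switch_bounds)
    also have "\<dots> \<le> rsq q" using \<open>k + 2 \<le> ?i\<close> by (intro piece_index_above) simp
    finally show False using hi \<open>k + 2 \<le> ?i\<close> piece_index_le[of q] by simp
  qed
  ultimately consider "?i = k" | "?i + 1 = k" | "?i = k + 1" by linarith
  then have "form_eq_at (pieces ! ?i) (pieces ! k) q"
  proof cases
    case 1
    then show ?thesis by (simp add: form_eq_at_iff)
  next
    case 2
    have "rsq q < switch ?i" using 2 assms(1) piece_index_below by simp
    then have "rsq q < rad2 (2 * ?i + 2)" using switch_bounds(2)[of ?i] by linarith
    moreover have "2 * k - 1 = 2 * ?i + 1" "0 < k" using 2 by auto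
    then have "rad2 (2 * ?i + 1) < rsq q" using lo by simp
    ultimately show ?thesis
      using pieces_agree[of ?i q] 2 assms(1) by simp
  next
    case 3
    have "switch k \<le> rsq q" using 3 piece_index_above by simp
    then have "rad2 (2 * k + 1) < rsq q" using switch_bounds(1)[of k] by linarith
    then show ?thesis
      using pieces_agree[of k q] hi 3 piece_index_le[of q] by (simp add: form_eq_at_iff)
  qed
  then show ?thesis
    by (simp add: glued_def form_eq_at_iff)
qed

lemma zone_open: "open (zone k)"
proof -
  have "continuous_on UNIV rsq" unfolding rsq_def by (intro continuous_intros)
  then show ?thesis
    unfolding zone_def Collect_conj_eq Collect_disj_eq
    by (intro open_Int open_Un open_Collect_less continuous_on_const) auto
qed

lemma zone_cover: "\<exists>k<5. q \<in> zone k"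
proof -
  have "q \<in> zone (piece_index q)"
  proof -
    have "piece_index q = 4 \<or> rsq q < rad2 (2 * piece_index q + 2)"
      using piece_index_le[of q] piece_index_below[of q] switch_bounds(2)[of "piece_index q"]
      by fastforce
    moreover have "piece_index q = 0 \<or> rad2 (2 * piece_index q - 1) < rsq q"
    proof (cases "piece_index q")
      case (Suc j)
      then have "switch j \<le> rsq q" by (intro piece_index_above) simp
      then show ?thesis using switch_bounds(1)[of j] Suc by simp
    qed simp
    ultimately show ?thesis
      by (simp add: zone_def)
  qed
  then show ?thesis using piece_index_le[of q] by (intro exI[of _ "piece_index q"]) auto
qed

lemma zone_rsq_lt: "k \<in> {1, 2} \<Longrightarrow> q \<in> zone k \<Longrightarrow> rsq q < 1/4"
  using rad2_6_lt rad2_le[of "2 * k + 2" 6] by (auto simp: zone_def)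

lemma smooth_alg_form_pieces:
  assumes "k < 5"
  shows "smooth_alg_form (zone k) (pieces ! k)"
proof -
  have cos: "\<forall>p\<in>zone k. cos (angle (slow_phase (fst p - 1/2))) \<noteq> 0" if "k \<in> {1, 2}"
    using zone_rsq_lt[OF that] abs_x_less_of_rsq cos_angle_slow_phase(1)
    by (metis less_irrefl prod.collapse)
  have shear_alg: "(\<lambda>p. shear (fst p - 1/2)) \<in> smooth_alg (zone k)" if "k \<in> {1, 2}"
    unfolding shear_def angle_def slow_phase_def using cos[OF that]
    by (intro smooth_alg_divide smooth_alg.mult smooth_alg.sin smooth_alg.cos smooth_alg.const
        smooth_alg.add smooth_alg_diff smooth_alg_divide_const smooth_alg.fstI)
       (auto simp: angle_def slow_phase_def)
  note intros = smooth_alg.const smooth_alg.fstI smooth_alg.sndI smooth_alg.add smooth_alg.mult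
    smooth_alg.sin smooth_alg.cos smooth_alg_minus smooth_alg_diff smooth_alg_power
    smooth_alg_divide_const smooth_alg_step_between smooth_alg_rsq
  from assms consider "k = 0" | "k = 1" | "k = 2" | "k = 3" | "k = 4" by linarith
  then show ?thesis
  proof cases
    case 1
    then show ?thesis
      unfolding pieces_def smooth_alg_form_def beta_centre_def fade_def fade_deriv_def split_beta'
      by (simp, intro conjI intros)
  next
    case 2
    with shear_alg have "(\<lambda>p. shear (fst p - 1/2)) \<in> smooth_alg (zone 1)" by simp
    with 2 show ?thesis
      unfolding pieces_def smooth_alg_form_def beta_shear_def split_beta'
      by (simp, intro conjI intros)
  next
    case 3
    with shear_alg have "(\<lambda>p. shear (fst p - 1/2)) \<in> smooth_alg (zone 2)" by simp
    with 3 show ?thesis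
      unfolding pieces_def smooth_alg_form_def beta_rescale_def rescaling_def angle_def
        slow_phase_def split_beta'
      by (simp add: numeral_eq_Suc, intro conjI intros)
  next
    case 4
    then show ?thesis
      unfolding pieces_def smooth_alg_form_def beta_stretch_def stretch_angle_def angle_def
        split_beta'
      by (simp add: numeral_eq_Suc, intro conjI intros)
  next
    case 5
    then show ?thesis
      unfolding pieces_def smooth_alg_form_def beta_outer_def outer_angle_def outer_amp_def
        outer_amp_deriv_def angle_def split_beta'
      by (simp add: numeral_eq_Suc, intro conjI intros)
  qed
qed

lemma smooth_form_on_glued:
  assumes "open U"
  shows "smooth_form_on U glued"
proof (rule smooth_form_on_local[OF assms])
  fix p
  obtain k where k: "k < 5" "p \<in> zone k" using zone_cover by blast
  have "smooth_alg_form (zone k) glued"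
    using glued_eq_piece[OF k(1)] by (intro smooth_alg_form_cong[OF smooth_alg_form_pieces[OF k(1)]]) blast
  then show "\<exists>V. open V \<and> p \<in> V \<and> smooth_alg_form V glued"
    using zone_open k(2) by blast
qed

lemma contact_coeff_pieces_pos:
  assumes "k < 5" "q \<in> zone k" "rsq q < 1/4"
  shows "0 < contact_coeff (pieces ! k) q"
proof -
  obtain x y where q: "q = (x, y)" by (cases q)
  have "\<bar>x - 1/2\<bar> < 1/2" using assms(3) abs_x_less_of_rsq q by simp
  from assms(1) consider "k = 0" | "k = 1" | "k = 2" | "k = 3" | "k = 4" by linarith
  then show ?thesis
    by cases (use \<open>\<bar>x - 1/2\<bar> < 1/2\<close> in \<open>simp_all add: q pieces_def numeral_eq_Suc
        contact_coeff_beta_centre contact_coeff_beta_shear_pos contact_coeff_beta_rescale_pos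
        contact_coeff_beta_stretch_pos contact_coeff_beta_outer_pos\<close>)
qed

lemma contact_coeff_glued_pos:
  assumes "rsq q < 1/4"
  shows "0 < contact_coeff glued q"
proof -
  obtain k where k: "k < 5" "q \<in> zone k" using zone_cover by blast
  then have "contact_coeff glued q = contact_coeff (pieces ! k) q"
    using glued_eq_piece by (intro contact_coeff_cong_open[OF zone_open]) auto
  then show ?thesis using contact_coeff_pieces_pos[OF k assms] by simp
qed

lemma glued_eq_std_form:
  assumes "rsq q \<le> r0\<^sup>2"
  shows "form_eq_at glued std_form q"
proof -
  have "rsq q < rad2 2" using assms rad2_chain rad2_0 by linarith
  then have "q \<in> zone 0" by (simp add: zone_def numeral_2_eq_2)
  then have "form_eq_at glued beta_centre q" using glued_eq_piece[of 0 q] by (simp add: pieces_def)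
  moreover have "step_between (rad2 0) (rad2 1) (rsq q) = 0"
    "step_between_deriv (rad2 0) (rad2 1) (rsq q) = 0"
    using assms rad2_chain by (auto intro: step_between_eq_0 step_between_deriv_eq_0 simp: rad2_0)
  ultimately show ?thesis
    by (simp add: form_eq_at_iff std_form_def beta_centre_def fade_def fade_deriv_def split_beta)
qed

lemma glued_eq_alpha0:
  assumes "rad2 9 < rsq q"
  shows "form_eq_at glued alpha0 q"
proof -
  have "rad2 7 < rsq q" using assms rad2_chain by linarith
  then have "q \<in> zone 4" by (simp add: zone_def)
  then have "form_eq_at glued beta_outer q" using glued_eq_piece[of 4 q] by (simp add: pieces_def)
  moreover have "step_between (rad2 8) (rad2 9) (rsq q) = 1"
    "step_between_deriv (rad2 8) (rad2 9) (rsq q) = 0"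
    using assms rad2_chain by (auto intro: step_between_eq_1 step_between_deriv_eq_0)
  moreover have "outer_angle q = 2 * pi * fst q"
    using calculation by (simp add: outer_angle_def outer_amp_def angle_def split_beta algebra_simps)
  ultimately show ?thesis
    by (simp add: form_eq_at_iff alpha0_def beta_outer_def outer_amp_def outer_amp_deriv_def
        split_beta)
qed

lemma glued_at_centre: "fst glued (1/2, 1/2) = 0" "fst (snd glued) (1/2, 1/2) = 0"
proof -
  have "rsq (1/2, 1/2) \<le> r0\<^sup>2" by (simp add: rsq_def)
  then have "form_eq_at glued std_form (1/2, 1/2)" by (rule glued_eq_std_form)
  then show "fst glued (1/2, 1/2) = 0" "fst (snd glued) (1/2, 1/2) = 0"
    by (simp_all add: form_eq_at_iff std_form_def)
qed

end

theorem lemma7: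
  fixes r0 \<epsilon> :: real
  assumes "1/4 < r0" and "r0 < 1/2" and "\<epsilon> > 0" and "r0 + \<epsilon> < 1/2"
  shows "\<exists>h1 h2 h3 :: real \<Rightarrow> real \<Rightarrow> real.
           let \<beta> = polar_form h1 h2 h3 in
             is_contact_on (disk (r0 + \<epsilon>)) \<beta> \<and>
             (\<forall>p\<in>cdisk r0. form_eq_at \<beta> std_form p) \<and>
             (\<exists>\<delta>>0. \<forall>p\<in>disk (r0 + \<epsilon>). dist p ctr > r0 + \<epsilon> - \<delta> \<longrightarrow> form_eq_at \<beta> alpha0 p)"
proof -
  interpret contact_interpolation r0 \<epsilon> using assms by unfold_locales auto
  have polar: "polar_form (polar_dz glued) (polar_dphi glued) (polar_dr glued) = glued"
    using glued_at_centre by (rule polar_form_polar_coeffs)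
  have "is_contact_on (disk (r0 + \<epsilon>)) glued"
    unfolding is_contact_on_def
  proof (intro conjI ballI smooth_form_on_glued)
    show "open (disk (r0 + \<epsilon>))" by (simp add: disk_def)
    fix p assume "p \<in> disk (r0 + \<epsilon>)"
    then have "rsq p < (r0 + \<epsilon>)\<^sup>2" using assms by (simp add: mem_disk_iff_rsq)
    also have "\<dots> < (1/2)\<^sup>2" using assms by (intro power_strict_mono) auto
    finally show "contact_coeff glued p \<noteq> 0"
      using contact_coeff_glued_pos[of p] by (simp add: power2_eq_square)
  qed
  moreover have "\<forall>p\<in>cdisk r0. form_eq_at glued std_form p"
    using assms glued_eq_std_form by (simp add: mem_cdisk_iff_rsq)
  moreover have "\<forall>p. r0 + \<epsilon> - gap < dist p ctr \<longrightarrow> form_eq_at glued alpha0 p"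
    using glued_eq_alpha0 rad_pos[of 9] less_dist_ctr_iff_rsq
    by (simp add: rad_9[symmetric] rad2_def)
  ultimately show ?thesis
    using gap_pos polar by (intro exI[of _ "polar_dz glued"] exI[of _ "polar_dphi glued"]
        exI[of _ "polar_dr glued"]) (auto simp: Let_def)
qed
end
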